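(* Let $\mathcal{U},\mathcal{X}$ be Banach spaces with either $\mathcal{X}=\mathcal{U}^*$ or $\mathcal{U}=\mathcal{X}^*$, denote by $\langle\cdot,\cdot\rangle_{\mathcal{U},\mathcal{X}}$ the corresponding duality pairing, let $\mathcal{G}$ be a Hilbert space, $g^\delta\in\mathcal{G}$, and $K\in L(\mathcal{U},\mathcal{G})$ with an adjoint $K^*\in L(\mathcal{G},\mathcal{X})$ satisfying $(Ku,g)_\mathcal{G}=\langle u,K^*g\rangle_{\mathcal{U},\mathcal{X}}$ for all $u\in\mathcal{U}$, $g\in\mathcal{G}$. Let $\{\mathcal{R}_\alpha\}_{\alpha>0}$ be proper, convex, lower semicontinuous functionals $\mathcal{R}_\alpha:\mathcal{U}\to\mathbb{R}\cup\{+\infty\}$, let $G(g):=\frac12\|g-g^\delta\|_\mathcal{G}^2$, and $J_\alpha(u,g):=G(g)+\mathcal{R}_\alpha(u)$. Let $u_\alpha^\delta$ be a minimizer of $u\mapsto J_\alpha(u,Ku)$ over $\mathcal{U}$. Assume there is a family of functions $\phi_\alpha:\mathcal{U}\times\mathcal{U}\to[0,\infty)$ satisfying $$\lambda(1-\lambda)\phi_\alpha(u_1,u_2)\le\lambda\mathcal{R}_\alpha(u_1)+(1-\lambda)\mathcal{R}_\alpha(u_2)-\mathcal{R}_\alpha(\lambda u_1+(1-\lambda)u_2)$$ for all $u_1,u_2\in\mathcal{U}$, $\alpha>0$, $\lambda\in(0,1)$. Then every $v\in\mathcal{U}$ and $g^*\in\mathcal{G}$ satisfy $$\frac12\|K(u_\alpha^\delta-v)\|_\mathcal{G}^2+\phi_\alpha(u_\alpha^\delta,v)\le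 J_\alpha(v,Kv)-J_\alpha(u_\alpha^\delta,Ku_\alpha^\delta)\le\mathcal{R}_\alpha(v)+\mathcal{R}_\alpha^*(K^*g^* )+G(Kv)+G^*(-g^* ).$$
   Context: For a convex functional $F:\mathcal{U}\to\mathbb{R}\cup\{+\infty\}$, its Fenchel conjugate is defined on $\mathcal{X}$ by $F^*(x)=\sup_{u\in\mathcal{U}}\langle u,x\rangle_{\mathcal{U},\mathcal{X}}-F(u)$; for $G$ on the Hilbert space $\mathcal{G}$, $G^*(g^* )=\sup_{g\in\mathcal{G}}(g^*,g)_\mathcal{G}-G(g)$. *)

theory Defs
  imports "HOL-Analysis.Analysis"
begin

definition proper_fun :: "('u \<Rightarrow> ereal) \<Rightarrow> bool" where
  "proper_fun F \<longleftrightarrow> (\<forall>u. F u \<noteq> -\<infinity>) \<and> (\<exists>u. F u \<noteq> \<infinity>)"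

definition convex_fun :: "('u::real_vector \<Rightarrow> ereal) \<Rightarrow> bool" where
  "convex_fun F \<longleftrightarrow> (\<forall>u1 u2 (l::real). 0 \<le> l \<and> l \<le> 1 \<longrightarrow>
      F (l *\<^sub>R u1 + (1 - l) *\<^sub>R u2) \<le> ereal l * F u1 + ereal (1 - l) * F u2)"

definition lsc_fun :: "('u::topological_space \<Rightarrow> ereal) \<Rightarrow> bool" where
  "lsc_fun F \<longleftrightarrow> (\<forall>c. closed {u. F u \<le> c})"

text \<open>Duality pairing: P u x = <u,x>. "X = U^*": x \<mapsto> <.,x> is a linear isometric
  bijection from X onto the bounded linear functionals on U.\<close>
definition dual_of :: "('x::real_normed_vector \<Rightarrow> 'u::real_normed_vector \<Rightarrow> real) \<Rightarrow> bool" where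
  "dual_of P \<longleftrightarrow> (\<forall>x. bounded_linear (P x)) \<and> linear (\<lambda>x. Blinfun (P x)) \<and>
     bij (\<lambda>x. Blinfun (P x)) \<and> (\<forall>x. norm (Blinfun (P x)) = norm x)"

definition duality_pairing :: "('u::real_normed_vector \<Rightarrow> 'x::real_normed_vector \<Rightarrow> real) \<Rightarrow> bool" where
  "duality_pairing P \<longleftrightarrow> dual_of (\<lambda>x u. P u x) \<or> dual_of P"

definition fenchel :: "('u \<Rightarrow> 'x \<Rightarrow> real) \<Rightarrow> ('u \<Rightarrow> ereal) \<Rightarrow> 'x \<Rightarrow> ereal" where
  "fenchel P F x = (SUP u. ereal (P u x) - F u)"

definition fenchel_H :: "('g::real_inner \<Rightarrow> ereal) \<Rightarrow> 'g \<Rightarrow> ereal" where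
  "fenchel_H F gs = (SUP g. ereal (inner gs g) - F g)"

end

theory Submission
  imports Defs
begin

text \<open>The data term \<open>u \<mapsto> G (K u)\<close> is quadratic, hence convex with modulus
  \<open>1/2 \<parallel>K (u\<^sub>1 - u\<^sub>2)\<parallel>\<^sup>2\<close>; adding the modulus \<open>\<phi>\<^sub>\<alpha>\<close> of \<open>R\<^sub>\<alpha>\<close> gives a modulus of
  \<open>u \<mapsto> J\<^sub>\<alpha>(u, K u)\<close>. Comparing the minimizer \<open>u\<close> with \<open>\<lambda> u + (1 - \<lambda>) v\<close> and letting
  \<open>\<lambda> \<rightarrow> 1\<close> gives the lower bound. The upper bound is weak duality: since
  \<open>\<langle>u, K\<^sup>* g\<^sup>*\<rangle> + (-g\<^sup>*, K u) = 0\<close>, the Fenchel--Young inequalities for \<open>R\<^sub>\<alpha>\<close> and \<open>G\<close>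
  bound \<open>-J\<^sub>\<alpha>(u, K u)\<close> by \<open>R\<^sub>\<alpha>\<^sup>*(K\<^sup>* g\<^sup>*) + G\<^sup>*(-g\<^sup>*)\<close>.\<close>

definition convex_with_modulus :: "('a::real_vector \<Rightarrow> ereal) \<Rightarrow> ('a \<Rightarrow> 'a \<Rightarrow> real) \<Rightarrow> bool" where
  "convex_with_modulus f m \<longleftrightarrow> (\<forall>u1 u2 l. 0 < l \<and> l < 1 \<longrightarrow>
      ereal (l * (1 - l) * m u1 u2) + f (l *\<^sub>R u1 + (1 - l) *\<^sub>R u2)
        \<le> ereal l * f u1 + ereal (1 - l) * f u2)"

lemma half_norm_sq_diff_convex_combination:
  fixes x y c :: "'a::real_inner"
  shows "(1/2) * (norm (l *\<^sub>R x + (1 - l) *\<^sub>R y - c))\<^sup>2 + l * (1 - l) * ((1/2) * (norm (x - y))\<^sup>2)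
    = l * ((1/2) * (norm (x - c))\<^sup>2) + (1 - l) * ((1/2) * (norm (y - c))\<^sup>2)"
  unfolding power2_norm_eq_inner
  by (simp add: inner_add_left inner_add_right inner_diff_left inner_diff_right inner_commute
      field_simps)

lemma convex_with_modulus_half_norm_sq_diff:
  fixes K :: "'a::real_vector \<Rightarrow> 'b::real_inner"
  assumes "linear K"
  shows "convex_with_modulus (\<lambda>w. ereal ((1/2) * (norm (K w - c))\<^sup>2))
           (\<lambda>u1 u2. (1/2) * (norm (K (u1 - u2)))\<^sup>2)"
  unfolding convex_with_modulus_def
proof (intro allI impI)
  fix u1 u2 and l :: real
  have "K (l *\<^sub>R u1 + (1 - l) *\<^sub>R u2) = l *\<^sub>R K u1 + (1 - l) *\<^sub>R K u2"
    "K (u1 - u2) = K u1 - K u2"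
    using assms by (simp_all add: linear_add linear_scale linear_diff)
  then show "ereal (l * (1 - l) * ((1/2) * (norm (K (u1 - u2)))\<^sup>2))
      + ereal ((1/2) * (norm (K (l *\<^sub>R u1 + (1 - l) *\<^sub>R u2) - c))\<^sup>2)
    \<le> ereal l * ereal ((1/2) * (norm (K u1 - c))\<^sup>2) + ereal (1 - l) * ereal ((1/2) * (norm (K u2 - c))\<^sup>2)"
    using half_norm_sq_diff_convex_combination[of l "K u1" "K u2" c] by simp
qed

lemma convex_with_modulus_add:
  fixes f g :: "'a::real_vector \<Rightarrow> ereal"
  assumes f: "convex_with_modulus f m" and g: "convex_with_modulus g n"
    and "\<And>w. f w \<noteq> -\<infinity>" "\<And>w. g w \<noteq> -\<infinity>"
  shows "convex_with_modulus (\<lambda>w. f w + g w) (\<lambda>u1 u2. m u1 u2 + n u1 u2)"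
  unfolding convex_with_modulus_def
proof (intro allI impI)
  fix u1 u2 :: 'a and l :: real
  assume l: "0 < l \<and> l < 1"
  let ?w = "l *\<^sub>R u1 + (1 - l) *\<^sub>R u2"
  have "ereal (l * (1 - l) * (m u1 u2 + n u1 u2)) + (f ?w + g ?w)
      = (ereal (l * (1 - l) * m u1 u2) + f ?w) + (ereal (l * (1 - l) * n u1 u2) + g ?w)"
    unfolding distrib_left plus_ereal.simps(1)[symmetric] by (simp only: ac_simps)
  also have "\<dots> \<le> (ereal l * f u1 + ereal (1 - l) * f u2) + (ereal l * g u1 + ereal (1 - l) * g u2)"
    using f[unfolded convex_with_modulus_def, rule_format, OF l]
      g[unfolded convex_with_modulus_def, rule_format, OF l]
    by (rule add_mono)
  also have "\<dots> = ereal l * (f u1 + g u1) + ereal (1 - l) * (f u2 + g u2)"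
    using assms(3,4) by (simp add: ereal_distrib_left ac_simps)
  finally show "ereal (l * (1 - l) * (m u1 u2 + n u1 u2)) + (f ?w + g ?w)
      \<le> ereal l * (f u1 + g u1) + ereal (1 - l) * (f u2 + g u2)" .
qed

lemma minimizer_gap_ge_modulus:
  assumes modulus: "convex_with_modulus f m"
    and min: "\<And>w. f u \<le> f w" and finite: "\<bar>f u\<bar> \<noteq> \<infinity>"
  shows "ereal (m u v) \<le> f v - f u"
proof -
  obtain a where a: "f u = ereal a" using finite by auto
  have "f v \<noteq> -\<infinity>" using min[of v] a by auto
  then consider "f v = \<infinity>" | b where "f v = ereal b" by (cases "f v") auto
  then show ?thesis
  proof cases
    case 1
    then show ?thesis using a by simp
  next
    case (2 b)
    have "l * m u v \<le> b - a" if l: "0 < l" "l < 1" for l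
    proof -
      let ?w = "l *\<^sub>R u + (1 - l) *\<^sub>R v"
      have "ereal (l * (1 - l) * m u v) + f ?w \<le> ereal (l * a + (1 - l) * b)"
        using modulus[unfolded convex_with_modulus_def, rule_format, of l u v] l a 2 by simp
      moreover have "ereal a \<le> f ?w" using min a by metis
      ultimately have "l * (1 - l) * m u v + a \<le> l * a + (1 - l) * b"
        by (cases "f ?w") auto
      then have "(1 - l) * (l * m u v) \<le> (1 - l) * (b - a)"
        by (simp add: algebra_simps)
      then show ?thesis using l by simp
    qed
    then have "m u v \<le> b - a" by (rule field_le_mult_one_interval)
    then show ?thesis using a 2 by simp
  qed
qed

lemma fenchel_young:
  "ereal (P u x) - F u \<le> fenchel P F x"
  unfolding fenchel_def by (rule SUP_upper) simp

lemma fenchel_H_young: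
  "ereal (inner gs g) - F g \<le> fenchel_H F gs"
  unfolding fenchel_H_def by (rule SUP_upper) simp

lemma weak_duality:
  assumes adjoint: "\<And>w g. inner (K w) g = P w (Kstar g)"
    and "\<bar>F u\<bar> \<noteq> \<infinity>" "\<bar>H (K u)\<bar> \<noteq> \<infinity>"
  shows "- (H (K u) + F u) \<le> fenchel P F (Kstar gs) + fenchel_H H (- gs)"
proof -
  have "- (H (K u) + F u) = (ereal (P u (Kstar gs)) - F u) + (ereal (inner (- gs) (K u)) - H (K u))"
    using assms(2,3) adjoint[of u gs] by (cases "F u"; cases "H (K u)") (auto simp: inner_commute)
  also have "\<dots> \<le> fenchel P F (Kstar gs) + fenchel_H H (- gs)"
    by (intro add_mono fenchel_young fenchel_H_young)
  finally show ?thesis .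
qed

theorem proposition2p2:
  fixes P :: "'u::banach \<Rightarrow> 'x::banach \<Rightarrow> real"
    and K :: "'u \<Rightarrow> 'g::{real_inner, complete_space}"
    and Kstar :: "'g \<Rightarrow> 'x"
    and gdelta :: 'g
    and R :: "real \<Rightarrow> 'u \<Rightarrow> ereal"
    and phi :: "real \<Rightarrow> 'u \<Rightarrow> 'u \<Rightarrow> real"
    and G :: "'g \<Rightarrow> ereal"
    and J :: "real \<Rightarrow> 'u \<Rightarrow> 'g \<Rightarrow> ereal"
    and \<alpha> :: real and u v :: 'u and gs :: 'g
  assumes pairing: "duality_pairing P"
    and K_lin: "bounded_linear K"
    and Kstar_lin: "bounded_linear Kstar"
    and adjoint: "\<And>w g. inner (K w) g = P w (Kstar g)"
    and R_proper: "\<And>a. a > 0 \<Longrightarrow> proper_fun (R a)"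
    and R_convex: "\<And>a. a > 0 \<Longrightarrow> convex_fun (R a)"
    and R_lsc: "\<And>a. a > 0 \<Longrightarrow> lsc_fun (R a)"
    and G_def: "\<And>g. G g = ereal ((1/2) * (norm (g - gdelta))\<^sup>2)"
    and J_def: "\<And>a w g. J a w g = G g + R a w"
    and phi_nonneg: "\<And>a u1 u2. phi a u1 u2 \<ge> 0"
    and phi_ineq: "\<And>a u1 u2 l. a > 0 \<Longrightarrow> 0 < l \<Longrightarrow> l < 1 \<Longrightarrow>
        ereal (l * (1 - l) * phi a u1 u2) + R a (l *\<^sub>R u1 + (1 - l) *\<^sub>R u2)
          \<le> ereal l * R a u1 + ereal (1 - l) * R a u2"
    and alpha_pos: "\<alpha> > 0"
    and minimizer: "\<And>w. J \<alpha> u (K u) \<le> J \<alpha> w (K w)"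
  shows "ereal ((1/2) * (norm (K (u - v)))\<^sup>2 + phi \<alpha> u v) \<le> J \<alpha> v (K v) - J \<alpha> u (K u)
     \<and> J \<alpha> v (K v) - J \<alpha> u (K u)
         \<le> R \<alpha> v + fenchel P (R \<alpha>) (Kstar gs) + G (K v) + fenchel_H G (- gs)"
proof
  have R_not_MInf: "\<And>w. R \<alpha> w \<noteq> -\<infinity>" and "\<exists>w. R \<alpha> w \<noteq> \<infinity>"
    using R_proper[OF alpha_pos] unfolding proper_fun_def by blast+
  then obtain w0 where "R \<alpha> w0 \<noteq> \<infinity>" by blast
  moreover have "J \<alpha> u (K u) \<le> J \<alpha> w0 (K w0)" by (rule minimizer)
  ultimately have "R \<alpha> u \<noteq> \<infinity>" unfolding J_def G_def by auto
  with R_not_MInf have Ru_finite: "\<bar>R \<alpha> u\<bar> \<noteq> \<infinity>" by auto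
  then have Ju_finite: "\<bar>J \<alpha> u (K u)\<bar> \<noteq> \<infinity>"
    unfolding J_def G_def by auto
  have "convex_with_modulus (\<lambda>w. J \<alpha> w (K w)) (\<lambda>u1 u2. (1/2) * (norm (K (u1 - u2)))\<^sup>2 + phi \<alpha> u1 u2)"
    unfolding J_def G_def
    using convex_with_modulus_half_norm_sq_diff[OF bounded_linear.linear[OF K_lin]]
      phi_ineq[OF alpha_pos] R_not_MInf
    by (intro convex_with_modulus_add) (auto simp: convex_with_modulus_def)
  then show "ereal ((1/2) * (norm (K (u - v)))\<^sup>2 + phi \<alpha> u v) \<le> J \<alpha> v (K v) - J \<alpha> u (K u)"
    using minimizer Ju_finite by (rule minimizer_gap_ge_modulus)
  have "\<bar>G (K u)\<bar> \<noteq> \<infinity>" using G_def by simp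
  then have "- J \<alpha> u (K u) \<le> fenchel P (R \<alpha>) (Kstar gs) + fenchel_H G (- gs)"
    unfolding J_def by (rule weak_duality[of K P Kstar "R \<alpha>", OF adjoint Ru_finite])
  then have "J \<alpha> v (K v) + - J \<alpha> u (K u)
      \<le> (G (K v) + R \<alpha> v) + (fenchel P (R \<alpha>) (Kstar gs) + fenchel_H G (- gs))"
    unfolding J_def[of \<alpha> v] by (rule add_left_mono)
  then show "J \<alpha> v (K v) - J \<alpha> u (K u)
      \<le> R \<alpha> v + fenchel P (R \<alpha>) (Kstar gs) + G (K v) + fenchel_H G (- gs)"
    by (simp only: minus_ereal_def ac_simps)
qed

end
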